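(* Let $Z$ denote the image of $k[c]$ in $\mathcal{U}_\chi(\mathfrak{sl}_2)$. (1) If $\chi=0$ or $\chi=e$, then $Z\cong k[c]/\langle c^p-2c^{(p+1)/2}+c\rangle$. (2) If $\chi=ah/2$ with $a\in k^\times$, then $Z\cong k[c]/\langle c^p-2c^{(p+1)/2}+c-a^2\rangle$.
   Context: Let $k$ be an algebraically closed field of characteristic $p>2$ and $\mathfrak{sl}_2=\mathfrak{sl}_2(k)$ with basis $e=\begin{pmatrix}0&1\\0&0\end{pmatrix}$, $f=\begin{pmatrix}0&0\\1&0\end{pmatrix}$, $h=\begin{pmatrix}1&0\\0&-1\end{pmatrix}$. The reduced enveloping algebras are $\mathcal{U}_0(\mathfrak{sl}_2)=\mathcal{U}(\mathfrak{sl}_2)/\langle e^p,f^p,h^p-h\rangle$, $\mathcal{U}_e(\mathfrak{sl}_2)=\mathcal{U}(\mathfrak{sl}_2)/\langle e^p,f^p-1,h^p-h\rangle$, and for $a\in k^\times$, $\mathcal{U}_{ah/2}(\mathfrak{sl}_2)=\mathcal{U}(\mathfrak{sl}_2)/\langle e^p,f^p,h^p-h-a\rangle$. Let $c=(h-1)^2+4ef$, which generates the Harish-Chandra center $\mathcal{U}(\mathfrak{sl}_2)^{\mathrm{SL}_2}=k[c]$. *)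

theory Defs
  imports "HOL-Computational_Algebra.Polynomial"
begin

text \<open>Free associative algebra k<E,F,H> on the three generators of sl_2.
  Elements are coefficient functions on words (lists of generators); the
  genuine free algebra consists of those with finite support (all elements
  produced below have finite support).\<close>

datatype gen = E | F | H

type_synonym 'k fa = "gen list \<Rightarrow> 'k"

definition fa_add :: "'k::comm_ring_1 fa \<Rightarrow> 'k fa \<Rightarrow> 'k fa" where
  "fa_add x y = (\<lambda>w. x w + y w)"

definition fa_smult :: "'k::comm_ring_1 \<Rightarrow> 'k fa \<Rightarrow> 'k fa" where
  "fa_smult c x = (\<lambda>w. c * x w)"

definition fa_diff :: "'k::comm_ring_1 fa \<Rightarrow> 'k fa \<Rightarrow> 'k fa" where
  "fa_diff x y = (\<lambda>w. x w - y w)"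

definition fa_mult :: "'k::comm_ring_1 fa \<Rightarrow> 'k fa \<Rightarrow> 'k fa" where
  "fa_mult x y = (\<lambda>w. \<Sum>i\<le>length w. x (take i w) * y (drop i w))"

definition fa_scalar :: "'k::comm_ring_1 \<Rightarrow> 'k fa" where
  "fa_scalar c = (\<lambda>w. if w = [] then c else 0)"

definition fa_gen :: "gen \<Rightarrow> 'k::comm_ring_1 fa" where
  "fa_gen g = (\<lambda>w. if w = [g] then 1 else 0)"

definition fa_pow :: "'k::comm_ring_1 fa \<Rightarrow> nat \<Rightarrow> 'k fa" where
  "fa_pow x n = ((fa_mult x) ^^ n) (fa_scalar 1)"

definition fa_comm :: "'k::comm_ring_1 fa \<Rightarrow> 'k fa \<Rightarrow> 'k fa" where
  "fa_comm x y = fa_diff (fa_mult x y) (fa_mult y x)"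

definition fa_poly :: "'k::comm_ring_1 poly \<Rightarrow> 'k fa \<Rightarrow> 'k fa" where
  "fa_poly q x = (\<lambda>w. \<Sum>i\<le>degree q. coeff q i * fa_pow x i w)"

text \<open>Defining relations of U(sl_2) together with the p-central relations
  e^p = 0, f^p = sf, h^p - h = sh (p = CHAR('k)).  U_0: sf = 0, sh = 0;
  U_e: sf = 1, sh = 0; U_{ah/2}: sf = 0, sh = a.\<close>
definition red_rels :: "'k::comm_ring_1 \<Rightarrow> 'k \<Rightarrow> 'k fa set" where
  "red_rels sf sh =
    { fa_diff (fa_comm (fa_gen E) (fa_gen F)) (fa_gen H),
      fa_diff (fa_comm (fa_gen H) (fa_gen E)) (fa_smult 2 (fa_gen E)),
      fa_add (fa_comm (fa_gen H) (fa_gen F)) (fa_smult 2 (fa_gen F)),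
      fa_pow (fa_gen E) CHAR('k),
      fa_diff (fa_pow (fa_gen F) CHAR('k)) (fa_scalar sf),
      fa_diff (fa_diff (fa_pow (fa_gen H) CHAR('k)) (fa_gen H)) (fa_scalar sh) }"

inductive_set fa_ideal :: "'k::comm_ring_1 fa set \<Rightarrow> 'k fa set" for R where
  zero: "fa_scalar 0 \<in> fa_ideal R"
| rel: "r \<in> R \<Longrightarrow> r \<in> fa_ideal R"
| add: "x \<in> fa_ideal R \<Longrightarrow> y \<in> fa_ideal R \<Longrightarrow> fa_add x y \<in> fa_ideal R"
| smult: "x \<in> fa_ideal R \<Longrightarrow> fa_smult c x \<in> fa_ideal R"
| lmult: "x \<in> fa_ideal R \<Longrightarrow> fa_mult (fa_gen g) x \<in> fa_ideal R"
| rmult: "x \<in> fa_ideal R \<Longrightarrow> fa_mult x (fa_gen g) \<in> fa_ideal R"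

definition casimir :: "'k::comm_ring_1 fa" where
  "casimir = fa_add (fa_pow (fa_diff (fa_gen H) (fa_scalar 1)) 2)
                    (fa_smult 4 (fa_mult (fa_gen E) (fa_gen F)))"

text \<open>q(c) = 0 in U_chi = U(sl_2)/<...> iff q(c) lies in the ideal.\<close>
definition vanishes_in :: "'k::comm_ring_1 \<Rightarrow> 'k \<Rightarrow> 'k fa \<Rightarrow> bool" where
  "vanishes_in sf sh x \<longleftrightarrow> x \<in> fa_ideal (red_rels sf sh)"

end

(*
  Write p = CHAR('k) and s for the value of h^p - h, and choose nu with nu^p - nu = s.  Then
  g - s^2 = prod_{i<p} (X - (nu + 1 + 2i)^2), and the same holds with nu replaced by any of the p
  roots nu + t of X^p - X - s.

  Sufficiency: the derivative of X^p - X - s = prod_t (X - nu - t) is -1, which splits -1 as a sum of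
  polynomials L_t(h) with (h - nu - t) L_t(h) = 0 in U_chi.  Each such weight vector commutes with c,
  and e^j L_t(h) (c - (nu + t + 1 + 2j)^2) = 4 f e^(j+1) L_t(h), so multiplying by all p factors
  pushes the power of e up to e^p = 0.

  Necessity: U_chi acts on the p^2-dimensional module U_chi / U_chi (h - nu) with basis f^a e^i v.
  On the diagonal vectors v_j = f^j e^j v the Casimir acts triangularly,
  c v_j = (nu + 1 + 2j)^2 v_j + 4 v_(j+1), so q(c) = 0 forces g - s^2 to divide q.
*)

theory Submission
  imports Defs "HOL-Library.Poly_Mapping" "HOL-Library.Function_Algebras" "HOL-Number_Theory.Cong"
begin

section \<open>The free algebra as a ring\<close>

text \<open>Finitely supported coefficient functions on words form an honest ring (words are wrapped in
  \<open>gword\<close> so that concatenation is a \<open>monoid_add\<close>); \<open>to_fa\<close> embeds it into the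
  coefficient-function model \<open>fa\<close>.\<close>

datatype gword = GWord (letters: "gen list")

instantiation gword :: monoid_add
begin
definition zero_gword :: gword where "zero_gword = GWord []"
definition plus_gword :: "gword \<Rightarrow> gword \<Rightarrow> gword" where
  "plus_gword u v = GWord (letters u @ letters v)"
instance by standard (auto simp: zero_gword_def plus_gword_def)
end

lemma plus_GWord [simp]: "GWord u + GWord v = GWord (u @ v)"
  by (simp add: plus_gword_def)

lemma zero_gword_eq: "0 = GWord []"
  by (simp add: zero_gword_def)

type_synonym 'k fx = "gword \<Rightarrow>\<^sub>0 'k"

definition fx_scalar :: "'k::comm_ring_1 \<Rightarrow> 'k fx" where
  "fx_scalar c = Poly_Mapping.single 0 c"

definition fx_gen :: "gen \<Rightarrow> 'k::comm_ring_1 fx" where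
  "fx_gen g = Poly_Mapping.single (GWord [g]) 1"

abbreviation "ee \<equiv> fx_gen E"
abbreviation "ff \<equiv> fx_gen F"
abbreviation "hh \<equiv> fx_gen H"

lemma fx_induct [case_names zero single_add]:
  assumes "P 0" and "\<And>w c X. P X \<Longrightarrow> P (Poly_Mapping.single w c + X)"
  shows "P X"
proof (induction X rule: update_induct)
  case (update X w c)
  then have "Poly_Mapping.update w c X = Poly_Mapping.single w c + X"
    by (intro poly_mapping_eqI) (auto simp: lookup_update lookup_add lookup_single when_def in_keys_iff)
  then show ?case using update assms(2) by metis
qed (use assms(1) in simp)

lemma fx_scalar_commute: "fx_scalar c * X = X * fx_scalar c"
proof (induction X rule: fx_induct)
  case (single_add w d X)
  then show ?case by (simp add: fx_scalar_def mult_single mult.commute algebra_simps)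
qed simp

lemma fx_scalar_left_commute: "fx_scalar c * (X * Y) = X * (fx_scalar c * Y)"
  by (metis mult.assoc fx_scalar_commute)

lemma fx_scalar_mult: "fx_scalar (a * b) = fx_scalar a * fx_scalar b"
  by (simp add: fx_scalar_def mult_single)

lemma fx_scalar_add: "fx_scalar (a + b) = fx_scalar a + fx_scalar b"
  by (simp add: fx_scalar_def single_add)

lemma fx_scalar_uminus: "fx_scalar (- a) = - fx_scalar a"
  by (simp add: fx_scalar_def single_uminus)

lemma fx_scalar_of_nat: "fx_scalar (of_nat n) = of_nat n"
  and fx_scalar_numeral: "fx_scalar (numeral m) = numeral m"
  and fx_scalar_0 [simp]: "fx_scalar 0 = 0"
  and fx_scalar_1 [simp]: "fx_scalar 1 = 1"
  by (simp_all add: fx_scalar_def)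

lemma fx_scalar_power: "fx_scalar (a ^ n) = fx_scalar a ^ n"
  by (induction n) (simp_all add: fx_scalar_mult)

definition to_fa :: "'k::comm_ring_1 fx \<Rightarrow> 'k fa" where
  "to_fa X = (\<lambda>w. Poly_Mapping.lookup X (GWord w))"

lemma to_fa_inject: "to_fa X = to_fa Y \<Longrightarrow> X = Y"
  unfolding to_fa_def by (metis poly_mapping_eqI gword.exhaust)

lemma to_fa_add: "to_fa (X + Y) = fa_add (to_fa X) (to_fa Y)"
  by (simp add: to_fa_def fa_add_def lookup_add)

lemma to_fa_diff: "to_fa (X - Y) = fa_diff (to_fa X) (to_fa Y)"
  by (simp add: to_fa_def fa_diff_def lookup_minus)

lemma to_fa_sum: "to_fa (sum u A) = (\<lambda>w. \<Sum>i\<in>A. to_fa (u i) w)"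
  by (simp add: to_fa_def lookup_sum)

lemma to_fa_scalar: "to_fa (fx_scalar c) = fa_scalar c"
  by (auto simp: to_fa_def fx_scalar_def fa_scalar_def lookup_single zero_gword_eq)

lemma to_fa_zero: "to_fa 0 = fa_scalar 0"
  using to_fa_scalar[of 0] by simp

lemma to_fa_gen: "to_fa (fx_gen g) = fa_gen g"
  by (auto simp: to_fa_def fx_gen_def fa_gen_def lookup_single)

lemma to_fa_scalar_mult: "to_fa (fx_scalar c * X) = fa_smult c (to_fa X)"
  by (simp add: to_fa_def fa_smult_def fx_scalar_def flip: mult_map_scale_conv_mult)
     (simp add: Poly_Mapping.map.rep_eq when_def fun_eq_iff)

lemma lookup_mult_GWord:
  "Poly_Mapping.lookup (X * Y) (GWord w) =
     (\<Sum>i\<le>length w. Poly_Mapping.lookup X (GWord (take i w)) * Poly_Mapping.lookup Y (GWord (drop i w)))"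
proof -
  let ?split = "\<lambda>i. (GWord (take i w), GWord (drop i w))"
  let ?t = "\<lambda>(u, v). Poly_Mapping.lookup X u * Poly_Mapping.lookup Y v when GWord w = u + v"
  have splits: "{uv. ?t uv \<noteq> 0} \<subseteq> ?split ` {..length w}"
  proof
    fix uv assume "uv \<in> {uv. ?t uv \<noteq> 0}"
    moreover obtain u v where "uv = (GWord u, GWord v)"
      by (metis gword.exhaust prod.exhaust)
    ultimately have "uv = (GWord u, GWord v)" "w = u @ v" by (auto simp: when_def split: if_splits)
    then show "uv \<in> ?split ` {..length w}" by (intro image_eqI[of _ _ "length u"]) auto
  qed
  have inj: "inj_on ?split {..length w}"
    by (rule inj_onI) (auto, metis length_take min.absorb2)
  have "Poly_Mapping.lookup (X * Y) (GWord w) = Sum_any ?t"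
    by (simp add: times_poly_mapping.rep_eq prod_fun_unfold_prod)
  also have "\<dots> = sum ?t (?split ` {..length w})"
    by (rule Sum_any.expand_superset[OF _ splits]) simp
  also have "\<dots> = (\<Sum>i\<le>length w. Poly_Mapping.lookup X (GWord (take i w)) * Poly_Mapping.lookup Y (GWord (drop i w)))"
    by (simp add: sum.reindex[OF inj] when_def)
  finally show ?thesis .
qed

lemma to_fa_mult: "to_fa (X * Y) = fa_mult (to_fa X) (to_fa Y)"
  by (simp add: to_fa_def fa_mult_def lookup_mult_GWord)

lemma to_fa_power: "to_fa (X ^ n) = fa_pow (to_fa X) n"
  by (induction n) (simp_all add: fa_pow_def to_fa_mult flip: to_fa_scalar)

lemma to_fa_numeral_mult: "to_fa (numeral n * X) = fa_smult (numeral n) (to_fa X)"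
  by (metis to_fa_scalar_mult fx_scalar_numeral)

section \<open>Congruence modulo a two-sided ideal\<close>

locale ring_ideal =
  fixes J :: "'a::ring_1 set"
  assumes zero_mem: "0 \<in> J"
    and add_mem: "x \<in> J \<Longrightarrow> y \<in> J \<Longrightarrow> x + y \<in> J"
    and mult_left_mem: "x \<in> J \<Longrightarrow> y * x \<in> J"
    and mult_right_mem: "x \<in> J \<Longrightarrow> x * y \<in> J"
begin

lemma uminus_mem: "x \<in> J \<Longrightarrow> - x \<in> J"
  using mult_left_mem[of x "- 1"] by simp

lemma diff_mem: "x \<in> J \<Longrightarrow> y \<in> J \<Longrightarrow> x - y \<in> J"
  using add_mem uminus_mem by (metis diff_conv_add_uminus)

lemma sum_mem: "(\<And>i. i \<in> A \<Longrightarrow> u i \<in> J) \<Longrightarrow> sum u A \<in> J"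
  by (induction A rule: infinite_finite_induct) (auto simp: zero_mem add_mem)

definition equiv_mod :: "'a \<Rightarrow> 'a \<Rightarrow> bool" (infix "\<approx>" 50) where
  "x \<approx> y \<longleftrightarrow> x - y \<in> J"

lemma equiv_refl [simp]: "x \<approx> x"
  by (simp add: equiv_mod_def zero_mem)

lemma equiv_sym: "x \<approx> y \<Longrightarrow> y \<approx> x"
  unfolding equiv_mod_def using uminus_mem by fastforce

lemma equiv_trans [trans]: "x \<approx> y \<Longrightarrow> y \<approx> z \<Longrightarrow> x \<approx> z"
  unfolding equiv_mod_def using add_mem by fastforce

lemma equiv_mem: "x \<approx> y \<Longrightarrow> y \<in> J \<Longrightarrow> x \<in> J"
  unfolding equiv_mod_def by (metis add_mem diff_add_cancel)

lemma equiv_add: "x \<approx> x' \<Longrightarrow> y \<approx> y' \<Longrightarrow> x + y \<approx> x' + y'"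
  unfolding equiv_mod_def using add_mem by (simp add: add_diff_add)

lemma equiv_mult: "x \<approx> x' \<Longrightarrow> y \<approx> y' \<Longrightarrow> x * y \<approx> x' * y'"
proof -
  assume "x \<approx> x'" "y \<approx> y'"
  then have "(x - x') * y + x' * (y - y') \<in> J"
    unfolding equiv_mod_def by (intro add_mem mult_left_mem mult_right_mem)
  then show ?thesis unfolding equiv_mod_def by (simp add: algebra_simps)
qed

lemma equiv_mult_left: "y \<approx> y' \<Longrightarrow> x * y \<approx> x * y'"
  and equiv_mult_right: "x \<approx> x' \<Longrightarrow> x * y \<approx> x' * y"
  by (simp_all add: equiv_mult)

lemma equiv_sum: "(\<And>i. i \<in> A \<Longrightarrow> u i \<approx> v i) \<Longrightarrow> sum u A \<approx> sum v A"
  by (induction A rule: infinite_finite_induct) (auto simp: equiv_add)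

lemma equiv_intertwine_power: "x * z \<approx> z * y \<Longrightarrow> x ^ n * z \<approx> z * y ^ n"
proof (induction n)
  case (Suc n)
  have "x ^ Suc n * z = x * (x ^ n * z)" by (simp add: mult.assoc)
  also have "\<dots> \<approx> x * (z * y ^ n)" using Suc by (intro equiv_mult_left)
  also have "\<dots> = (x * z) * y ^ n" by (simp add: mult.assoc)
  also have "\<dots> \<approx> (z * y) * y ^ n" using Suc by (intro equiv_mult_right)
  also have "\<dots> = z * y ^ Suc n" by (simp add: mult.assoc power_Suc)
  finally show ?case .
qed simp

end

section \<open>The defining ideal of the reduced enveloping algebra\<close>

definition fx_rels :: "'k::comm_ring_1 \<Rightarrow> 'k \<Rightarrow> 'k fx set" where
  "fx_rels sf sh =
    {ee * ff - ff * ee - hh, hh * ee - ee * hh - 2 * ee, hh * ff - ff * hh + 2 * ff,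
     ee ^ CHAR('k), ff ^ CHAR('k) - fx_scalar sf, hh ^ CHAR('k) - hh - fx_scalar sh}"

lemma to_fa_fx_rels: "to_fa ` fx_rels sf sh = red_rels sf sh"
  unfolding fx_rels_def red_rels_def
  by (simp only: to_fa_diff to_fa_add to_fa_numeral_mult image_insert image_empty)
    (simp add: to_fa_mult to_fa_gen to_fa_power to_fa_scalar fa_comm_def)

definition fx_ideal :: "'k::comm_ring_1 \<Rightarrow> 'k \<Rightarrow> 'k fx set" where
  "fx_ideal sf sh = {X. to_fa X \<in> fa_ideal (red_rels sf sh)}"

lemma fx_rels_subset_fx_ideal: "fx_rels sf sh \<subseteq> fx_ideal sf sh"
  unfolding fx_ideal_def using to_fa_fx_rels by (blast intro: fa_ideal.rel)

lemma fx_ideal_mult_word: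
  fixes sf sh :: "'k::comm_ring_1"
  assumes "X \<in> fx_ideal sf sh"
  shows "Poly_Mapping.single (GWord w) 1 * X \<in> fx_ideal sf sh"
    and "X * Poly_Mapping.single (GWord w) 1 \<in> fx_ideal sf sh"
proof -
  have gen_left: "fx_gen g * Y \<in> fx_ideal sf sh" and gen_right: "Y * fx_gen g \<in> fx_ideal sf sh"
    if "Y \<in> fx_ideal sf sh" for Y :: "'k fx" and g
    using that by (simp_all add: fx_ideal_def to_fa_mult to_fa_gen fa_ideal.lmult fa_ideal.rmult)
  show "Poly_Mapping.single (GWord w) 1 * X \<in> fx_ideal sf sh"
  proof (induction w)
    case (Cons g w)
    have "Poly_Mapping.single (GWord (g # w)) 1 = fx_gen g * Poly_Mapping.single (GWord w) (1::'k)"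
      by (simp add: fx_gen_def mult_single)
    then show ?case using Cons gen_left by (simp add: mult.assoc)
  qed (use assms in \<open>simp add: flip: zero_gword_eq\<close>)
  show "X * Poly_Mapping.single (GWord w) 1 \<in> fx_ideal sf sh"
  proof (induction w rule: rev_induct)
    case (snoc g w)
    have "Poly_Mapping.single (GWord (w @ [g])) 1 = Poly_Mapping.single (GWord w) (1::'k) * fx_gen g"
      by (simp add: fx_gen_def mult_single)
    then show ?case using snoc gen_right by (simp flip: mult.assoc)
  qed (use assms in \<open>simp add: flip: zero_gword_eq\<close>)
qed

lemma ring_ideal_fx_ideal: "ring_ideal (fx_ideal sf (sh :: 'k::comm_ring_1))"
proof
  have scalar: "fx_scalar c * X \<in> fx_ideal sf sh" if "X \<in> fx_ideal sf sh" for X c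
    using that by (simp add: fx_ideal_def to_fa_scalar_mult fa_ideal.smult)
  have single: "Poly_Mapping.single w c = fx_scalar c * Poly_Mapping.single w 1" for w and c :: 'k
    by (simp add: fx_scalar_def mult_single)
  show zero: "0 \<in> fx_ideal sf sh"
    by (simp add: fx_ideal_def to_fa_zero fa_ideal.zero)
  show add: "X + Y \<in> fx_ideal sf sh" if "X \<in> fx_ideal sf sh" "Y \<in> fx_ideal sf sh" for X Y
    using that by (simp add: fx_ideal_def to_fa_add fa_ideal.add)
  fix X Y :: "'k fx"
  assume X: "X \<in> fx_ideal sf sh"
  show "Y * X \<in> fx_ideal sf sh"
  proof (induction Y rule: fx_induct)
    case (single_add w c Y)
    have "Poly_Mapping.single w c * X \<in> fx_ideal sf sh"
      using X scalar fx_ideal_mult_word(1) single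
      by (metis gword.exhaust mult.assoc)
    then show ?case using single_add add by (simp add: distrib_right)
  qed (simp add: zero)
  show "X * Y \<in> fx_ideal sf sh"
  proof (induction Y rule: fx_induct)
    case (single_add w c Y)
    have "X * Poly_Mapping.single w c \<in> fx_ideal sf sh"
      using X scalar fx_ideal_mult_word(2) single
      by (metis gword.exhaust fx_scalar_left_commute)
    then show ?case using single_add add by (simp add: distrib_left)
  qed (simp add: zero)
qed

lemma fa_ideal_subset_image:
  assumes "ring_ideal I" and "R \<subseteq> I"
  shows "fa_ideal (to_fa ` R) \<subseteq> to_fa ` I"
proof
  interpret ring_ideal I by fact
  fix x assume "x \<in> fa_ideal (to_fa ` R)"
  then show "x \<in> to_fa ` I"
  proof (induction rule: fa_ideal.induct)
    case zero
    show ?case using zero_mem to_fa_zero by (metis image_eqI)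
  next
    case (rel r)
    then show ?case using assms(2) by blast
  next
    case (add x y)
    then show ?case by (auto simp flip: to_fa_add intro: add_mem)
  next
    case (smult x c)
    then show ?case by (auto simp flip: to_fa_scalar_mult intro: mult_left_mem)
  next
    case (lmult x g)
    then show ?case by (auto simp flip: to_fa_gen to_fa_mult intro: mult_left_mem)
  next
    case (rmult x g)
    then show ?case by (auto simp flip: to_fa_gen to_fa_mult intro: mult_right_mem)
  qed
qed

lemma fx_ideal_least:
  assumes "ring_ideal I" and "fx_rels sf sh \<subseteq> I"
  shows "fx_ideal sf sh \<subseteq> I"
proof
  fix X assume "X \<in> fx_ideal sf sh"
  then have "to_fa X \<in> to_fa ` I"
    using fa_ideal_subset_image[OF assms] by (auto simp: fx_ideal_def to_fa_fx_rels)
  then show "X \<in> I" using to_fa_inject by blast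
qed

section \<open>Sufficiency: the Casimir polynomial lies in the ideal\<close>

definition fx_poly :: "'k::comm_ring_1 poly \<Rightarrow> 'k fx \<Rightarrow> 'k fx" where
  "fx_poly q X = (\<Sum>i\<le>degree q. fx_scalar (coeff q i) * X ^ i)"

lemma fx_poly_bound: "degree q \<le> n \<Longrightarrow> fx_poly q X = (\<Sum>i\<le>n. fx_scalar (coeff q i) * X ^ i)"
  unfolding fx_poly_def by (rule sum.mono_neutral_left) (auto simp: coeff_eq_0)

lemma to_fa_poly: "to_fa (fx_poly q X) = fa_poly q (to_fa X)"
  by (simp add: fx_poly_def fa_poly_def to_fa_sum to_fa_scalar_mult to_fa_power fa_smult_def)

lemma fx_poly_0 [simp]: "fx_poly 0 X = 0"
  and fx_poly_1 [simp]: "fx_poly 1 X = 1"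
  by (simp_all add: fx_poly_def)

lemma fx_poly_add: "fx_poly (p + q) X = fx_poly p X + fx_poly q X"
proof -
  define n where "n = max (degree p) (degree q)"
  have "degree (p + q) \<le> n" by (simp add: n_def degree_add_le)
  then show ?thesis
    by (simp add: fx_poly_bound[of _ n] n_def fx_scalar_add distrib_right sum.distrib)
qed

lemma fx_poly_smult: "fx_poly (smult a q) X = fx_scalar a * fx_poly q X"
  by (simp add: fx_poly_bound[of _ "degree q"] degree_smult_le sum_distrib_left fx_scalar_mult mult.assoc)

lemma fx_poly_pCons: "fx_poly (pCons a q) X = fx_scalar a + X * fx_poly q X"
proof -
  have "fx_poly (pCons a q) X = (\<Sum>i\<le>Suc (degree q). fx_scalar (coeff (pCons a q) i) * X ^ i)"
    by (rule fx_poly_bound) (simp add: degree_pCons_le)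
  also have "\<dots> = fx_scalar a + (\<Sum>i\<le>degree q. fx_scalar (coeff q i) * X ^ Suc i)"
    by (subst sum.atMost_Suc_shift) simp
  also have "(\<Sum>i\<le>degree q. fx_scalar (coeff q i) * X ^ Suc i) = X * fx_poly q X"
    by (simp add: fx_poly_def sum_distrib_left fx_scalar_left_commute mult.assoc)
  finally show ?thesis .
qed

lemma fx_poly_mult: "fx_poly (p * q) X = fx_poly p X * fx_poly q X"
proof (induction p)
  case (pCons a p)
  have "fx_poly (pCons a p * q) X = fx_scalar a * fx_poly q X + X * fx_poly (p * q) X"
    by (simp add: fx_poly_add fx_poly_smult fx_poly_pCons)
  then show ?case using pCons by (simp add: fx_poly_pCons algebra_simps)
qed simp

lemma fx_poly_diff: "fx_poly (p - q) X = fx_poly p X - fx_poly q X"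
  using fx_poly_add[of "p - q" q X] by (simp add: algebra_simps)

lemma fx_poly_uminus: "fx_poly (- p) X = - fx_poly p X"
  using fx_poly_diff[of 0 p X] by simp

lemma fx_poly_sum: "fx_poly (sum u A) X = (\<Sum>i\<in>A. fx_poly (u i) X)"
  by (induction A rule: infinite_finite_induct) (auto simp: fx_poly_add)

lemma fx_poly_monom: "fx_poly (monom c n) X = fx_scalar c * X ^ n"
  by (induction n) (simp_all add: monom_0 monom_Suc fx_poly_pCons fx_scalar_left_commute)

lemma fx_poly_linear: "fx_poly [:c, 1:] X = fx_scalar c + X"
  by (simp add: fx_poly_pCons)

definition fx_casimir :: "'k::comm_ring_1 fx" where
  "fx_casimir = (hh - 1) ^ 2 + 4 * (ee * ff)"

lemma to_fa_casimir: "to_fa fx_casimir = casimir"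
  unfolding fx_casimir_def casimir_def
  by (simp only: to_fa_add to_fa_numeral_mult)
    (simp add: to_fa_power to_fa_diff to_fa_gen to_fa_mult flip: to_fa_scalar)

definition casimir_factors :: "'k::comm_ring_1 \<Rightarrow> nat \<Rightarrow> 'k poly" where
  "casimir_factors \<nu> j = (\<Prod>i\<in>{j..<CHAR('k)}. [:- ((\<nu> + 1 + of_nat (2 * i)) ^ 2), 1:])"

lemma casimir_factors_Suc:
  "j < CHAR('k) \<Longrightarrow>
    casimir_factors \<nu> j = [:- ((\<nu> + 1 + of_nat (2 * j)) ^ 2), 1:] * casimir_factors (\<nu>::'k::comm_ring_1) (Suc j)"
  by (simp add: casimir_factors_def prod.atLeast_Suc_lessThan)

lemma numeral_mult_commute: "x * numeral n = numeral n * (x :: 'a::ring_1)"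
  by (metis mult_of_nat_commute of_nat_numeral)

lemma four_mult: "4 * x = x + x + x + (x :: 'a::ring_1)"
proof -
  have "(4::'a) * x = 2 * (2 * x)" by (simp flip: mult.assoc)
  then show ?thesis by (simp add: mult_2 add.assoc)
qed

lemma numeral_mult_left_commute: "x * (numeral n * y) = numeral n * (x * (y :: 'a::ring_1))"
  by (metis mult.assoc numeral_mult_commute)

locale sl2_ideal = ring_ideal J for J :: "'k::comm_ring_1 fx set" +
  fixes sf sh :: 'k
  assumes fx_rels_subset: "fx_rels sf sh \<subseteq> J"
begin

lemma rel_ef: "ee * ff - ff * ee - hh \<in> J"
  and rel_he: "hh * ee - ee * hh - 2 * ee \<in> J"
  and rel_hf: "hh * ff - ff * hh + 2 * ff \<in> J"
  and rel_e_power: "ee ^ CHAR('k) \<in> J"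
  and rel_h_power: "hh ^ CHAR('k) - hh - fx_scalar sh \<in> J"
  using fx_rels_subset by (auto simp: fx_rels_def)

lemma casimir_commute_h: "fx_casimir * hh \<approx> hh * fx_casimir"
proof -
  have "fx_casimir * hh - hh * fx_casimir
      = 4 * (- (ee * (hh * ff - ff * hh + 2 * ff)) - (hh * ee - ee * hh - 2 * ee) * ff)"
    by (simp add: fx_casimir_def algebra_simps power2_eq_square numeral_mult_commute numeral_mult_left_commute)
  also have "\<dots> \<in> J"
    by (intro mult_left_mem diff_mem uminus_mem mult_right_mem rel_he rel_hf)
  finally show ?thesis unfolding equiv_mod_def .
qed

lemma casimir_commute_e: "fx_casimir * ee \<approx> ee * fx_casimir"
proof -
  let ?R = "hh * ee - ee * hh - 2 * ee"
  have "fx_casimir * ee - ee * fx_casimir = ?R * (hh + 1) + (hh - 1) * ?R - 4 * (ee * (ee * ff - ff * ee - hh))"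
    by (simp add: fx_casimir_def algebra_simps power2_eq_square numeral_mult_commute
        numeral_mult_left_commute mult_2 four_mult)
  also have "\<dots> \<in> J"
    by (intro diff_mem add_mem mult_left_mem mult_right_mem rel_he rel_ef)
  finally show ?thesis unfolding equiv_mod_def .
qed

lemma casimir_equiv_fe: "fx_casimir \<approx> (hh + 1) ^ 2 + 4 * (ff * ee)"
proof -
  have "fx_casimir - ((hh + 1) ^ 2 + 4 * (ff * ee)) = 4 * (ee * ff - ff * ee - hh)"
    by (simp add: fx_casimir_def algebra_simps power2_eq_square numeral_mult_commute mult_2 four_mult)
  also have "\<dots> \<in> J" by (intro mult_left_mem rel_ef)
  finally show ?thesis unfolding equiv_mod_def .
qed

lemma h_shift_e_power: "(hh + fx_scalar t) * ee ^ j \<approx> ee ^ j * (hh + fx_scalar (t + of_nat (2 * j)))"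
proof (induction j)
  case (Suc j)
  let ?t = "fx_scalar (t + of_nat (2 * j))"
  have he: "hh * ee \<approx> ee * (hh + 2)"
    using rel_he by (simp add: equiv_mod_def algebra_simps numeral_mult_commute)
  have "(hh + fx_scalar t) * ee ^ Suc j = ((hh + fx_scalar t) * ee ^ j) * ee"
    by (simp only: power_Suc2 mult.assoc)
  also have "\<dots> \<approx> (ee ^ j * (hh + ?t)) * ee" using Suc by (rule equiv_mult_right)
  also have "\<dots> = ee ^ j * (hh * ee + ?t * ee)" by (simp add: algebra_simps)
  also have "\<dots> \<approx> ee ^ j * (ee * (hh + 2) + ?t * ee)"
    by (intro equiv_mult_left equiv_add he equiv_refl)
  also have "\<dots> = (ee ^ j * ee) * (hh + 2 + ?t)"
    by (simp add: fx_scalar_commute[of _ ee] distrib_left add.assoc mult.assoc)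
  also have "\<dots> = ee ^ Suc j * (hh + 2 + ?t)"
    by (simp only: power_Suc2)
  also have "hh + 2 + ?t = hh + fx_scalar (t + of_nat (2 * Suc j))"
    by (simp add: fx_scalar_add fx_scalar_of_nat fx_scalar_numeral algebra_simps)
  finally show ?case .
qed simp

lemma weight_shift_power:
  assumes "hh * \<epsilon> \<approx> fx_scalar \<nu> * \<epsilon>"
  shows "(hh + fx_scalar t) ^ n * \<epsilon> \<approx> fx_scalar ((\<nu> + t) ^ n) * \<epsilon>"
proof -
  have "(hh + fx_scalar t) * \<epsilon> = hh * \<epsilon> + fx_scalar t * \<epsilon>" by (simp add: distrib_right)
  also have "\<dots> \<approx> fx_scalar \<nu> * \<epsilon> + fx_scalar t * \<epsilon>" by (intro equiv_add assms equiv_refl)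
  also have "\<dots> = \<epsilon> * fx_scalar (\<nu> + t)" by (simp add: fx_scalar_add fx_scalar_commute distrib_left)
  finally have "(hh + fx_scalar t) ^ n * \<epsilon> \<approx> \<epsilon> * fx_scalar (\<nu> + t) ^ n"
    by (rule equiv_intertwine_power)
  then show ?thesis by (metis fx_scalar_power fx_scalar_commute)
qed

lemma casimir_step:
  assumes \<epsilon>_casimir: "\<epsilon> * fx_casimir \<approx> fx_casimir * \<epsilon>" and weight: "hh * \<epsilon> \<approx> fx_scalar \<nu> * \<epsilon>"
  shows "ee ^ j * \<epsilon> * (fx_casimir - fx_scalar ((\<nu> + 1 + of_nat (2 * j)) ^ 2))
    \<approx> 4 * ff * ee ^ Suc j * \<epsilon>"
proof -
  let ?s = "fx_scalar ((\<nu> + 1 + of_nat (2 * j)) ^ 2)"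
  have e_casimir: "ee ^ j * fx_casimir \<approx> fx_casimir * ee ^ j"
    by (rule equiv_intertwine_power, rule equiv_sym, rule casimir_commute_e)
  have h_e: "(hh + fx_scalar 1) ^ 2 * ee ^ j \<approx> ee ^ j * (hh + fx_scalar (1 + of_nat (2 * j))) ^ 2"
    by (rule equiv_intertwine_power, rule h_shift_e_power)
  have h_\<epsilon>: "(hh + fx_scalar (1 + of_nat (2 * j))) ^ 2 * \<epsilon> \<approx> ?s * \<epsilon>"
    using weight_shift_power[OF weight] by (simp add: add.assoc)
  have "ee ^ j * \<epsilon> * fx_casimir = ee ^ j * (\<epsilon> * fx_casimir)" by (simp add: mult.assoc)
  also have "\<dots> \<approx> ee ^ j * (fx_casimir * \<epsilon>)" by (rule equiv_mult_left, rule \<epsilon>_casimir)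
  also have "\<dots> = (ee ^ j * fx_casimir) * \<epsilon>" by (simp add: mult.assoc)
  also have "\<dots> \<approx> (fx_casimir * ee ^ j) * \<epsilon>" by (rule equiv_mult_right, rule e_casimir)
  also have "\<dots> \<approx> (((hh + fx_scalar 1) ^ 2 + 4 * (ff * ee)) * ee ^ j) * \<epsilon>"
    using casimir_equiv_fe by (simp add: equiv_mult_right)
  also have "\<dots> = ((hh + fx_scalar 1) ^ 2 * ee ^ j) * \<epsilon> + 4 * ff * ee ^ Suc j * \<epsilon>"
    by (simp add: algebra_simps power_Suc)
  also have "\<dots> \<approx> (ee ^ j * (hh + fx_scalar (1 + of_nat (2 * j))) ^ 2) * \<epsilon> + 4 * ff * ee ^ Suc j * \<epsilon>"
    by (rule equiv_add[OF equiv_mult_right[OF h_e] equiv_refl])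
  also have "\<dots> = ee ^ j * ((hh + fx_scalar (1 + of_nat (2 * j))) ^ 2 * \<epsilon>) + 4 * ff * ee ^ Suc j * \<epsilon>"
    by (simp add: mult.assoc)
  also have "\<dots> \<approx> ee ^ j * (?s * \<epsilon>) + 4 * ff * ee ^ Suc j * \<epsilon>"
    by (rule equiv_add[OF equiv_mult_left[OF h_\<epsilon>] equiv_refl])
  finally have "ee ^ j * \<epsilon> * fx_casimir \<approx> ?s * (ee ^ j * \<epsilon>) + 4 * ff * ee ^ Suc j * \<epsilon>"
    by (simp only: fx_scalar_left_commute)
  then have "ee ^ j * \<epsilon> * fx_casimir - ?s * (ee ^ j * \<epsilon>) \<approx> 4 * ff * ee ^ Suc j * \<epsilon>"
    by (simp add: equiv_mod_def algebra_simps)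
  then show ?thesis by (simp add: right_diff_distrib fx_scalar_commute[of _ "ee ^ j * \<epsilon>"])
qed

lemma weight_vector_filtration:
  assumes "\<epsilon> * fx_casimir \<approx> fx_casimir * \<epsilon>" and "hh * \<epsilon> \<approx> fx_scalar \<nu> * \<epsilon>"
  shows "j \<le> CHAR('k) \<Longrightarrow> x * ee ^ j * \<epsilon> * fx_poly (casimir_factors \<nu> j) fx_casimir \<in> J"
proof (induction "CHAR('k) - j" arbitrary: j x)
  case 0
  then have "j = CHAR('k)" by simp
  then show ?case
    using mult_right_mem[OF mult_left_mem[OF rel_e_power, of x], of \<epsilon>]
    by (simp add: casimir_factors_def flip: mult.assoc)
next
  case (Suc m)
  then have j: "j < CHAR('k)" by simp
  let ?s = "(\<nu> + 1 + of_nat (2 * j)) ^ 2"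
  let ?W = "fx_poly (casimir_factors \<nu> (Suc j)) fx_casimir"
  have "x * ee ^ j * \<epsilon> * fx_poly (casimir_factors \<nu> j) fx_casimir
      = x * (ee ^ j * \<epsilon> * (fx_casimir - fx_scalar ?s)) * ?W"
  proof -
    have "fx_poly [:- ?s, 1:] fx_casimir = fx_casimir - fx_scalar ?s"
      by (simp add: fx_poly_linear fx_scalar_uminus)
    then show ?thesis by (simp only: casimir_factors_Suc[OF j] fx_poly_mult mult.assoc)
  qed
  also have "\<dots> \<approx> x * (4 * ff * ee ^ Suc j * \<epsilon>) * ?W"
    by (intro equiv_mult_right equiv_mult_left casimir_step assms)
  also have "\<dots> = (x * 4 * ff) * ee ^ Suc j * \<epsilon> * ?W"
    by (simp add: mult.assoc)
  finally show ?case
    using Suc.hyps(1)[of "Suc j" "x * 4 * ff"] Suc.hyps(2) j by (auto intro: equiv_mem)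
qed

lemma fx_poly_commute: "X * Y \<approx> Y * X \<Longrightarrow> fx_poly q X * Y \<approx> Y * fx_poly q X"
proof -
  assume XY: "X * Y \<approx> Y * X"
  have "fx_poly q X * Y = (\<Sum>i\<le>degree q. fx_scalar (coeff q i) * (X ^ i * Y))"
    by (simp add: fx_poly_def sum_distrib_right mult.assoc)
  also have "\<dots> \<approx> (\<Sum>i\<le>degree q. fx_scalar (coeff q i) * (Y * X ^ i))"
    using XY by (intro equiv_sum equiv_mult_left equiv_intertwine_power)
  also have "\<dots> = Y * fx_poly q X"
    by (simp add: fx_poly_def sum_distrib_left fx_scalar_left_commute)
  finally show ?thesis .
qed

lemma h_weight_vector:
  assumes "[:- \<nu>, 1:] * L = monom 1 CHAR('k) - [:sh, 1:]"
  shows "hh * fx_poly L hh \<approx> fx_scalar \<nu> * fx_poly L hh"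
proof -
  have "hh * fx_poly L hh - fx_scalar \<nu> * fx_poly L hh = (fx_scalar (- \<nu>) + hh) * fx_poly L hh"
    by (simp add: fx_scalar_uminus algebra_simps)
  also have "\<dots> = fx_poly ([:- \<nu>, 1:] * L) hh"
    by (simp only: fx_poly_mult fx_poly_linear)
  also have "\<dots> = hh ^ CHAR('k) - hh - fx_scalar sh"
    by (simp only: assms fx_poly_diff fx_poly_monom fx_poly_linear fx_scalar_1 mult_1_left diff_diff_eq add.commute)
  finally show ?thesis using rel_h_power by (simp add: equiv_mod_def)
qed

lemma casimir_factors_mem:
  assumes "finite T" and sum_L: "(\<Sum>t\<in>T. L t) = -1"
    and L: "\<And>t. t \<in> T \<Longrightarrow> [:- \<nu> t, 1:] * L t = monom 1 CHAR('k) - [:sh, 1:]"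
    and G: "\<And>t. t \<in> T \<Longrightarrow> casimir_factors (\<nu> t) 0 = G"
  shows "fx_poly G fx_casimir \<in> J"
proof -
  have "fx_poly (L t) hh * fx_poly G fx_casimir \<in> J" if t: "t \<in> T" for t
  proof -
    have "fx_poly (L t) hh * fx_casimir \<approx> fx_casimir * fx_poly (L t) hh"
      by (rule fx_poly_commute, rule equiv_sym, rule casimir_commute_h)
    then have "1 * ee ^ 0 * fx_poly (L t) hh * fx_poly (casimir_factors (\<nu> t) 0) fx_casimir \<in> J"
      by (rule weight_vector_filtration[OF _ h_weight_vector[OF L[OF t]]]) simp
    then show ?thesis by (simp only: G[OF t] power_0 mult_1_left)
  qed
  then have "- (\<Sum>t\<in>T. fx_poly (L t) hh * fx_poly G fx_casimir) \<in> J"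
    by (intro uminus_mem sum_mem)
  moreover have "(\<Sum>t\<in>T. fx_poly (L t) hh) = -1"
    using fx_poly_sum[of L T hh] by (simp add: sum_L fx_poly_uminus)
  ultimately show ?thesis by (simp flip: sum_distrib_right)
qed

end

section \<open>Polynomial identities in characteristic p\<close>

lemma of_nat_eq_below_CHAR:
  "i < CHAR('a) \<Longrightarrow> j < CHAR('a) \<Longrightarrow> (of_nat i :: 'a::semiring_1_cancel) = of_nat j \<Longrightarrow> i = j"
  by (metis of_nat_eq_iff_cong_CHAR cong_less_modulus_unique_nat)

lemma monic_eq_prod_roots:
  fixes P :: "'a::idom poly"
  assumes "degree P = n" and "lead_coeff P = 1" and "inj_on a {..<n}"
    and "\<And>i. i < n \<Longrightarrow> poly P (a i) = 0"
  shows "P = (\<Prod>i<n. [:- a i, 1:])"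
proof (rule poly_eqI_degree_lead_coeff[where n = n and A = "a ` {..<n}"])
  have "degree (\<Prod>i<n. [:- a i, 1:]) = n" by (simp add: degree_prod_sum_eq)
  then have "coeff (\<Prod>i<n. [:- a i, 1:]) n = (\<Prod>i<n. lead_coeff [:- a i, 1:])"
    by (metis lead_coeff_prod)
  then show "coeff P n = coeff (\<Prod>i<n. [:- a i, 1:]) n"
    using assms(1,2) by simp
  show "n \<le> card (a ` {..<n})" using assms(3) by (simp add: card_image)
  show "degree (\<Prod>i<n. [:- a i, 1:]) \<le> n" by (simp add: degree_prod_sum_eq)
  show "\<And>z. z \<in> a ` {..<n} \<Longrightarrow> poly P z = poly (\<Prod>i<n. [:- a i, 1:]) z"
    using assms(4) by (auto simp: poly_prod)
qed (use assms(1) in simp)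

context
  assumes prime_char: "prime CHAR('k::field)"
begin

lemma frobenius_add: "(x + y :: 'k) ^ CHAR('k) = x ^ CHAR('k) + y ^ CHAR('k)"
  by (rule freshmans_dream[OF prime_char refl])

lemma frobenius_diff: "(x - y :: 'k) ^ CHAR('k) = x ^ CHAR('k) - y ^ CHAR('k)"
  using frobenius_add[of "x - y" y] by (simp add: algebra_simps)

lemma frobenius_of_nat: "(of_nat n :: 'k) ^ CHAR('k) = of_nat n"
proof (induction n)
  case 0
  show ?case using prime_gt_0_nat[OF prime_char] by simp
next
  case (Suc n)
  then show ?case using frobenius_add[of "of_nat n" 1] by (simp add: add.commute)
qed

lemma artin_schreier_root:
  "\<nu> ^ CHAR('k) - \<nu> = s \<Longrightarrow> poly (monom 1 CHAR('k) - [:s, 1:]) (\<nu> + of_nat t :: 'k) = 0"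
  by (simp add: poly_monom frobenius_add frobenius_of_nat algebra_simps)

lemma degree_artin_schreier: "degree (monom 1 CHAR('k) - [:s, 1:] :: 'k poly) = CHAR('k)"
proof -
  have "CHAR('k) > 1" using prime_gt_1_nat[OF prime_char] by simp
  then have "degree (monom 1 CHAR('k) + (- [:s, 1:]) :: 'k poly) = CHAR('k)"
    by (subst degree_add_eq_left) (auto simp: degree_monom_eq)
  then show ?thesis by (simp only: diff_conv_add_uminus)
qed

lemma artin_schreier_factorization:
  assumes "(\<nu>::'k) ^ CHAR('k) - \<nu> = s"
  shows "monom 1 CHAR('k) - [:s, 1:] = (\<Prod>t<CHAR('k). [:- (\<nu> + of_nat t), 1:])"
proof (rule monic_eq_prod_roots[where a = "\<lambda>t. \<nu> + of_nat t"])
  show "lead_coeff (monom 1 CHAR('k) - [:s, 1:] :: 'k poly) = 1"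
    using prime_gt_1_nat[OF prime_char] by (simp add: degree_artin_schreier coeff_eq_0)
  show "inj_on (\<lambda>t. \<nu> + of_nat t) {..<CHAR('k)}"
    by (auto intro!: inj_onI dest: of_nat_eq_below_CHAR)
  show "\<And>t. poly (monom 1 CHAR('k) - [:s, 1:]) (\<nu> + of_nat t) = 0"
    by (rule artin_schreier_root[OF assms])
qed (rule degree_artin_schreier)

lemma artin_schreier_solvable:
  assumes "\<forall>q :: 'k poly. degree q > 0 \<longrightarrow> (\<exists>x. poly q x = 0)"
  shows "\<exists>\<nu>::'k. \<nu> ^ CHAR('k) - \<nu> = s"
proof -
  have "degree (monom 1 CHAR('k) - [:s, 1:] :: 'k poly) > 0"
    using prime_gt_0_nat[OF prime_char] by (simp add: degree_artin_schreier)
  then obtain \<nu> where "poly (monom 1 CHAR('k) - [:s, 1:]) \<nu> = 0" using assms by blast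
  then show ?thesis by (intro exI[of _ \<nu>]) (simp add: poly_monom algebra_simps)
qed

lemma pderiv_artin_schreier: "pderiv (monom 1 CHAR('k) - [:s, 1:] :: 'k poly) = -1"
  by (simp add: pderiv_diff pderiv_monom pderiv_pCons one_pCons)

text \<open>The left-hand side is the derivative of \<open>X^p - X - s\<close>.\<close>

lemma artin_schreier_partition_of_unity:
  assumes "\<nu> ^ CHAR('k) - \<nu> = s"
  shows "(\<Sum>t<CHAR('k). \<Prod>u\<in>{..<CHAR('k)} - {t}. [:- (\<nu> + of_nat u), 1:]) = (-1 :: 'k poly)"
  using pderiv_artin_schreier[of s]
  by (simp add: artin_schreier_factorization[OF assms] pderiv_prod pderiv_pCons)

end

lemma infinite_UNIV_if_roots:
  assumes "\<forall>q :: 'k::field poly. degree q > 0 \<longrightarrow> (\<exists>x. poly q x = 0)"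
  shows "infinite (UNIV :: 'k set)"
proof
  assume fin: "finite (UNIV :: 'k set)"
  define q :: "'k poly" where "q = (\<Prod>a\<in>UNIV. [:- a, 1:]) + 1"
  have "degree (\<Prod>a\<in>(UNIV::'k set). [:- a, 1:]) = card (UNIV :: 'k set)"
    by (simp add: degree_prod_sum_eq)
  moreover have "card (UNIV :: 'k set) > 0" using fin by (simp add: card_gt_0_iff)
  ultimately have "degree q > 0" unfolding q_def by (subst degree_add_eq_left) auto
  then obtain x where "poly q x = 0" using assms by blast
  moreover have "poly (\<Prod>a\<in>(UNIV::'k set). [:- a, 1:]) x = 0"
    using fin by (auto simp: poly_prod intro!: prod_zero bexI[of _ x])
  ultimately show False by (simp add: q_def)
qed

lemma square_root_if_roots:
  assumes "\<forall>q :: 'k::field poly. degree q > 0 \<longrightarrow> (\<exists>x. poly q x = 0)"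
  shows "\<exists>\<mu>::'k. \<mu> ^ 2 = x"
proof -
  have "degree [:- x, 0, 1:] > 0" by simp
  then obtain \<mu> where "poly [:- x, 0, 1:] \<mu> = 0" using assms by blast
  then show ?thesis by (auto simp: power2_eq_square algebra_simps)
qed

lemma poly_eqI_infinite:
  assumes "infinite (UNIV :: 'k::field set)" and "\<And>x. poly P x = poly Q x"
  shows "P = (Q :: 'k poly)"
proof -
  obtain A :: "'k set" where "finite A" "card A = Suc (max (degree P) (degree Q))"
    using infinite_arbitrarily_large[OF assms(1)] by blast
  then show ?thesis by (intro poly_eqI_degree[of A]) (use assms(2) in auto)
qed

definition casimir_poly :: "'k::comm_ring_1 poly" where
  "casimir_poly = monom 1 CHAR('k) - smult 2 (monom 1 ((CHAR('k) + 1) div 2)) + monom 1 1"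

context
  assumes prime_char: "prime CHAR('k::field)" and char_gt_2: "CHAR('k) > 2"
begin

lemma odd_CHAR: "odd CHAR('k)"
  using prime_char char_gt_2 by (metis prime_odd_nat)

lemma two_neq_zero: "(2::'k) \<noteq> 0"
proof
  assume "(2::'k) = 0"
  then have "CHAR('k) dvd 2" using of_nat_eq_0_iff_char_dvd[where 'a = 'k, of 2] by simp
  then show False using char_gt_2 by (auto dest: dvd_imp_le)
qed

lemma prod_diff_double: "(\<Prod>i<CHAR('k). (y - of_nat (2 * i) :: 'k)) = y ^ CHAR('k) - y"
proof -
  have "monom 1 CHAR('k) - [:0, 1:] = (\<Prod>i<CHAR('k). [:- of_nat (2 * i), 1:] :: 'k poly)"
  proof (rule monic_eq_prod_roots[where a = "\<lambda>i. of_nat (2 * i)"])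
    show "degree (monom 1 CHAR('k) - [:0, 1:] :: 'k poly) = CHAR('k)"
      by (rule degree_artin_schreier[OF prime_char])
    then show "lead_coeff (monom 1 CHAR('k) - [:0, 1:] :: 'k poly) = 1"
      using char_gt_2 by (simp add: coeff_eq_0)
    have "coprime 2 CHAR('k)" using odd_CHAR by simp
    then show "inj_on (\<lambda>i. of_nat (2 * i) :: 'k) {..<CHAR('k)}"
      by (intro inj_onI)
        (simp add: of_nat_eq_iff_cong_CHAR cong_mult_lcancel_nat cong_less_modulus_unique_nat
          del: of_nat_mult)
    show "\<And>i. poly (monom 1 CHAR('k) - [:0, 1:]) (of_nat (2 * i) :: 'k) = 0"
      by (simp add: poly_monom frobenius_of_nat[OF prime_char] del: of_nat_mult)
  qed
  from arg_cong[OF this, of "\<lambda>P. poly P y"] show ?thesis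
    by (simp add: poly_prod poly_monom)
qed

lemma prod_add_double: "(\<Prod>i<CHAR('k). (z + of_nat (2 * i) :: 'k)) = z ^ CHAR('k) - z"
proof -
  have "(\<Prod>i<CHAR('k). (z + of_nat (2 * i) :: 'k)) = (\<Prod>i<CHAR('k). - 1 * (- z - of_nat (2 * i)))"
    by (rule prod.cong) (auto simp: algebra_simps)
  also have "\<dots> = (- 1) ^ CHAR('k) * ((- z) ^ CHAR('k) - (- z))"
    by (simp only: prod.distrib prod_constant card_lessThan prod_diff_double)
  also have "\<dots> = z ^ CHAR('k) - z"
    using odd_CHAR by (simp add: power_minus_odd)
  finally show ?thesis .
qed

lemma casimir_poly_factorization:
  assumes roots: "\<forall>q :: 'k poly. degree q > 0 \<longrightarrow> (\<exists>x. poly q x = 0)"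
    and \<nu>: "(\<nu>::'k) ^ CHAR('k) - \<nu> = s"
  shows "casimir_poly - [:s ^ 2:] = casimir_factors \<nu> 0"
proof (rule poly_eqI_infinite[OF infinite_UNIV_if_roots[OF roots]])
  fix x :: 'k
  obtain \<mu> where \<mu>: "\<mu> ^ 2 = x" using square_root_if_roots[OF roots] by blast
  define y where "y = \<mu> - \<nu> - 1"
  define z where "z = \<mu> + \<nu> + 1"
  define m where "m = \<mu> ^ CHAR('k) - \<mu>"
  have "poly (casimir_factors \<nu> 0) x = (\<Prod>i<CHAR('k). (y - of_nat (2 * i)) * (z + of_nat (2 * i)))"
    unfolding casimir_factors_def poly_prod atLeast0LessThan
    by (rule prod.cong) (auto simp: y_def z_def \<mu>[symmetric] power2_eq_square algebra_simps)
  also have "\<dots> = (y ^ CHAR('k) - y) * (z ^ CHAR('k) - z)"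
    by (simp only: prod.distrib prod_diff_double prod_add_double)
  also have "\<dots> = (m - s) * (m + s)"
    by (simp add: y_def z_def m_def \<nu>[symmetric] frobenius_add[OF prime_char]
        frobenius_diff[OF prime_char] algebra_simps)
  also have "\<dots> = m ^ 2 - s ^ 2"
    by (simp add: power2_eq_square algebra_simps)
  also have "m ^ 2 = x ^ CHAR('k) - 2 * x ^ ((CHAR('k) + 1) div 2) + x"
  proof -
    have "CHAR('k) + 1 = 2 * ((CHAR('k) + 1) div 2)" using odd_CHAR by presburger
    then have "\<mu> ^ (CHAR('k) + 1) = (\<mu> ^ 2) ^ ((CHAR('k) + 1) div 2)"
      by (metis power_mult)
    then show ?thesis
      by (simp add: m_def \<mu>[symmetric] power2_eq_square algebra_simps power_mult_distrib
          flip: power_add power_mult)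
  qed
  finally show "poly (casimir_poly - [:s ^ 2:]) x = poly (casimir_factors \<nu> 0) x"
    by (simp add: casimir_poly_def poly_monom)
qed

end

section \<open>Necessity: a module on which the Casimir acts triangularly\<close>

type_synonym 'k vec = "nat \<times> nat \<Rightarrow> 'k"

declare plus_fun_apply [simp del] zero_fun_apply [simp del] minus_apply [simp del] uminus_apply [simp del]

lemmas vec_apply = plus_fun_apply zero_fun_apply minus_apply uminus_apply

definition vscale :: "'k::field \<Rightarrow> 'k vec \<Rightarrow> 'k vec" where
  "vscale c v = (\<lambda>x. c * v x)"

lemma vscale_apply [simp]: "vscale c v x = c * v x"
  by (simp add: vscale_def)

lemma vscale_add_left: "vscale (a + b) u = vscale a u + vscale b u"
  by (simp add: fun_eq_iff vec_apply distrib_right)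

lemma vscale_0_left [simp]: "vscale 0 u = 0"
  and vscale_0_right [simp]: "vscale c 0 = 0"
  by (simp_all add: fun_eq_iff vec_apply)

lemma vscale_vscale: "vscale a (vscale b u) = vscale (a * b) u"
  by (simp add: vscale_def mult.assoc)

lemma sum_vec_apply: "(sum u A :: 'k::field vec) x = (\<Sum>i\<in>A. u i x)"
  by (induction A rule: infinite_finite_induct) (auto simp: vec_apply)

definition box_proj :: "'k::field vec \<Rightarrow> 'k vec" where
  "box_proj v = (\<lambda>(a, i). if a < CHAR('k) \<and> i < CHAR('k) then v (a, i) else 0)"

lemma box_proj_apply [simp]:
  "box_proj v (a, i) = (if a < CHAR('k) \<and> i < CHAR('k) then v (a, i) else (0::'k::field))"
  by (simp add: box_proj_def)

definition box_endo :: "('k::field vec \<Rightarrow> 'k vec) \<Rightarrow> bool" where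
  "box_endo T \<longleftrightarrow> (\<forall>u v. T (u + v) = T u + T v) \<and> (\<forall>c u. T (vscale c u) = vscale c (T u))
     \<and> (\<forall>u. T (box_proj u) = T u) \<and> (\<forall>u. box_proj (T u) = T u)"

lemma box_endoI:
  assumes "\<And>u v. T (u + v) = T u + T v" and "\<And>c u. T (vscale c u) = vscale c (T u)"
    and "\<And>u. T (box_proj u) = T u" and "\<And>u. box_proj (T u) = T u"
  shows "box_endo T"
  using assms by (simp add: box_endo_def)

lemma box_endo_add: "box_endo T \<Longrightarrow> T (u + v) = T u + T v"
  and box_endo_vscale: "box_endo T \<Longrightarrow> T (vscale c u) = vscale c (T u)"
  and box_endo_box_proj: "box_endo T \<Longrightarrow> T (box_proj u) = T u"
  and box_proj_box_endo: "box_endo T \<Longrightarrow> box_proj (T u) = T u"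
  by (simp_all add: box_endo_def)

lemma box_endo_zero: "box_endo T \<Longrightarrow> T 0 = 0"
  using box_endo_vscale[of T 0 0] by (simp add: vscale_def zero_fun_def)

lemma box_endo_sum: "box_endo T \<Longrightarrow> T (sum u A) = (\<Sum>i\<in>A. T (u i))"
proof (induction A rule: infinite_finite_induct)
  case (insert x F)
  then show ?case using box_endo_add[of T "u x" "sum u F"] by simp
qed (simp_all add: box_endo_zero)

lemma box_endo_box_proj_self: "box_endo box_proj"
  by (rule box_endoI) (auto simp: fun_eq_iff vec_apply)

lemma box_endo_comp: "box_endo T \<Longrightarrow> box_endo S \<Longrightarrow> box_endo (T \<circ> S)"
  by (simp add: box_endo_def)

lemma box_endo_funpow: "box_endo T \<Longrightarrow> box_endo (T ^^ Suc n)"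
proof (induction n)
  case (Suc n)
  then have "box_endo (T \<circ> T ^^ Suc n)" by (intro box_endo_comp)
  then show ?case by (metis funpow.simps(2))
qed simp

lemma box_endo_sum_fun:
  fixes T :: "'i \<Rightarrow> 'k::field vec \<Rightarrow> 'k vec"
  assumes "\<And>i. i \<in> A \<Longrightarrow> box_endo (T i)"
  shows "box_endo (\<lambda>v. \<Sum>i\<in>A. vscale (c i) (T i v))"
proof (rule box_endoI)
  have proj: "T i v (a, b) = 0" if "i \<in> A" "\<not> (a < CHAR('k) \<and> b < CHAR('k))" for i v a b
    using box_proj_box_endo[OF assms[OF that(1)], of v] that(2)
    by (metis (no_types, lifting) box_proj_apply)
  show "box_proj (\<Sum>i\<in>A. vscale (c i) (T i v)) = (\<Sum>i\<in>A. vscale (c i) (T i v))" for v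
    by (auto simp: fun_eq_iff sum_vec_apply proj)
qed (use assms in \<open>auto simp: box_endo_def sum.distrib fun_eq_iff sum_vec_apply algebra_simps vec_apply
      sum_distrib_left intro!: sum.cong\<close>)

text \<open>The coordinate \<open>(a, i)\<close>, for \<open>a, i < p\<close>, stands for the basis vector \<open>f^a e^i v\<close> of
  \<open>U_chi / U_chi (h - lam)\<close>, where \<open>h v = lam v\<close>; the operators ignore and produce no entries
  outside this box, and \<open>box_proj\<close> plays the role of the identity.\<close>

definition weight :: "'k::field \<Rightarrow> nat \<Rightarrow> nat \<Rightarrow> 'k" where
  "weight lam a i = lam + of_nat (2 * i) - of_nat (2 * a)"

definition op_E :: "'k::field \<Rightarrow> 'k vec \<Rightarrow> 'k vec" where
  "op_E lam v = (\<lambda>(a, i). if a < CHAR('k) \<and> i < CHAR('k) then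
      (if 0 < i then v (a, i - 1) else 0) +
      (if a + 1 < CHAR('k) then of_nat (a + 1) * (lam + of_nat (2 * i) - of_nat a) * v (a + 1, i) else 0)
    else 0)"

definition op_F :: "'k::field \<Rightarrow> 'k vec \<Rightarrow> 'k vec" where
  "op_F sf v = (\<lambda>(a, i). if a < CHAR('k) \<and> i < CHAR('k) then
      (if 0 < a then v (a - 1, i) else sf * v (CHAR('k) - 1, i))
    else 0)"

definition op_H :: "'k::field \<Rightarrow> 'k vec \<Rightarrow> 'k vec" where
  "op_H lam v = (\<lambda>(a, i). if a < CHAR('k) \<and> i < CHAR('k) then weight lam a i * v (a, i) else 0)"

lemma op_E_apply [simp]: "op_E lam v (a, i) = (if a < CHAR('k) \<and> i < CHAR('k) then
      (if 0 < i then v (a, i - 1) else 0) +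
      (if a + 1 < CHAR('k) then of_nat (a + 1) * (lam + of_nat (2 * i) - of_nat a) * v (a + 1, i) else 0)
    else (0::'k::field))"
  and op_F_apply [simp]: "op_F sf v (a, i) = (if a < CHAR('k) \<and> i < CHAR('k) then
      (if 0 < a then v (a - 1, i) else sf * v (CHAR('k) - 1, i))
    else (0::'k))"
  and op_H_apply [simp]: "op_H lam v (a, i) =
    (if a < CHAR('k) \<and> i < CHAR('k) then weight lam a i * v (a, i) else (0::'k))"
  by (simp_all add: op_E_def op_F_def op_H_def)

lemma box_endo_mod_E: "box_endo (op_E lam)"
  and box_endo_mod_F: "box_endo (op_F sf)"
  and box_endo_mod_H: "box_endo (op_H lam)"
  by (auto intro!: box_endoI simp: fun_eq_iff split_paired_All vec_apply algebra_simps)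

definition op_gen :: "'k::field \<Rightarrow> 'k \<Rightarrow> gen \<Rightarrow> 'k vec \<Rightarrow> 'k vec" where
  "op_gen lam sf g = (case g of E \<Rightarrow> op_E lam | F \<Rightarrow> op_F sf | H \<Rightarrow> op_H lam)"

lemma box_endo_mod_gen: "box_endo (op_gen lam sf g)"
  by (cases g) (simp_all add: op_gen_def box_endo_mod_E box_endo_mod_F box_endo_mod_H)

primrec word_act :: "'k::field \<Rightarrow> 'k \<Rightarrow> gen list \<Rightarrow> 'k vec \<Rightarrow> 'k vec" where
  "word_act lam sf [] = box_proj"
| "word_act lam sf (g # w) = op_gen lam sf g \<circ> word_act lam sf w"

lemma box_endo_word_act: "box_endo (word_act lam sf w)"
  by (induction w) (simp_all only: word_act.simps box_endo_box_proj_self box_endo_comp box_endo_mod_gen)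

lemma word_act_append: "word_act lam sf (u @ w) v = word_act lam sf u (word_act lam sf w v)"
  by (induction u) (simp_all add: box_proj_box_endo[OF box_endo_word_act])

definition module_act :: "'k::field \<Rightarrow> 'k \<Rightarrow> 'k fx \<Rightarrow> 'k vec \<Rightarrow> 'k vec" where
  "module_act lam sf X v =
    (\<Sum>w\<in>Poly_Mapping.keys X. vscale (Poly_Mapping.lookup X w) (word_act lam sf (letters w) v))"

lemma module_act_superset:
  assumes "finite S" and "Poly_Mapping.keys X \<subseteq> S"
  shows "module_act lam sf X v = (\<Sum>w\<in>S. vscale (Poly_Mapping.lookup X w) (word_act lam sf (letters w) v))"
  unfolding module_act_def
  by (rule sum.mono_neutral_left) (use assms in \<open>auto simp: in_keys_iff fun_eq_iff zero_fun_def\<close>)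

lemma box_endo_mod_act: "box_endo (module_act lam sf X)"
  unfolding module_act_def[abs_def] by (intro box_endo_sum_fun box_endo_word_act)

lemma module_act_add: "module_act lam sf (X + Y) v = module_act lam sf X v + module_act lam sf Y v"
proof -
  let ?S = "Poly_Mapping.keys X \<union> Poly_Mapping.keys Y"
  let ?t = "\<lambda>Z w. vscale (Poly_Mapping.lookup Z w) (word_act lam sf (letters w) v)"
  have "module_act lam sf (X + Y) v = (\<Sum>w\<in>?S. ?t (X + Y) w)"
    by (rule module_act_superset) (auto simp: keys_add)
  also have "\<dots> = (\<Sum>w\<in>?S. ?t X w) + (\<Sum>w\<in>?S. ?t Y w)"
    by (simp add: lookup_add vscale_add_left sum.distrib)
  also have "\<dots> = module_act lam sf X v + module_act lam sf Y v"
    by (simp add: module_act_superset[of ?S])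
  finally show ?thesis .
qed

lemma module_act_zero [simp]: "module_act lam sf 0 v = 0"
  by (simp add: module_act_def)

lemma module_act_single: "module_act lam sf (Poly_Mapping.single w c) v = vscale c (word_act lam sf (letters w) v)"
  by (subst module_act_superset[of "{w}"]) auto

lemma module_act_mult: "module_act lam sf (X * Y) v = module_act lam sf X (module_act lam sf Y v)"
proof (induction X rule: fx_induct)
  case (single_add w c X)
  have "module_act lam sf (Poly_Mapping.single w c * Y) v
      = module_act lam sf (Poly_Mapping.single w c) (module_act lam sf Y v)"
  proof (induction Y rule: fx_induct)
    case (single_add u d Y)
    have "module_act lam sf (Poly_Mapping.single w c * Poly_Mapping.single u d) v
        = module_act lam sf (Poly_Mapping.single w c) (module_act lam sf (Poly_Mapping.single u d) v)"
      by (cases w, cases u)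
        (simp add: mult_single module_act_single word_act_append box_endo_vscale[OF box_endo_word_act] mult.commute
          fun_eq_iff)
    then show ?case using single_add
      by (simp add: distrib_left module_act_add box_endo_add[OF box_endo_mod_act])
  qed (simp add: box_endo_zero[OF box_endo_mod_act])
  then show ?case using single_add by (simp add: distrib_right module_act_add)
qed simp

lemma module_act_one: "module_act lam sf 1 v = box_proj v"
  by (simp add: module_act_single zero_gword_eq fun_eq_iff flip: single_one)

lemma module_act_gen: "module_act lam sf (fx_gen g) v = op_gen lam sf g v"
  by (simp add: fx_gen_def module_act_single fun_eq_iff box_endo_box_proj[OF box_endo_mod_gen])

lemma module_act_scalar_mult: "module_act lam sf (fx_scalar c * X) v = vscale c (module_act lam sf X v)"
proof -
  have "module_act lam sf (fx_scalar c) u = vscale c (box_proj u)" for u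
    by (simp add: fx_scalar_def module_act_single zero_gword_eq)
  then show ?thesis
    by (simp add: module_act_mult box_proj_box_endo[OF box_endo_mod_act])
qed

lemma module_act_scalar: "module_act lam sf (fx_scalar c) v = vscale c (box_proj v)"
  using module_act_scalar_mult[of lam sf c 1 v] by (simp add: module_act_one)

lemma module_act_uminus: "module_act lam sf (- X) v = - module_act lam sf X v"
  using module_act_add[of lam sf X "- X" v] by (simp add: minus_unique)

lemma module_act_diff: "module_act lam sf (X - Y) v = module_act lam sf X v - module_act lam sf Y v"
  by (simp only: diff_conv_add_uminus module_act_add module_act_uminus)

lemma module_act_power: "module_act lam sf (X ^ n) v = (module_act lam sf X ^^ n) (box_proj v)"
  by (induction n) (simp_all add: module_act_one module_act_mult)

lemma module_act_sum: "module_act lam sf (sum u A) v = (\<Sum>i\<in>A. module_act lam sf (u i) v)"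
  by (induction A rule: infinite_finite_induct) (simp_all add: module_act_add)

definition annihilator :: "'k::field \<Rightarrow> 'k \<Rightarrow> 'k fx set" where
  "annihilator lam sf = {X. \<forall>v. module_act lam sf X v = 0}"

lemma ring_ideal_annihilator: "ring_ideal (annihilator lam sf)"
  by unfold_locales
    (simp_all add: annihilator_def module_act_add module_act_mult box_endo_zero[OF box_endo_mod_act])

lemma of_nat_eq_minus_one_CHAR: "Suc a = CHAR('k::ring_1) \<Longrightarrow> (of_nat a :: 'k) = -1"
  by (metis of_nat_CHAR of_nat_Suc add.commute eq_neg_iff_add_eq_0)

definition unit_vec :: "nat \<times> nat \<Rightarrow> 'k::field vec" where
  "unit_vec b = (\<lambda>x. if x = b then 1 else 0)"

lemma box_proj_eq_sum_unit_vec: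
  "box_proj v = (\<Sum>b\<in>{..<CHAR('k)} \<times> {..<CHAR('k)}. vscale (v b) (unit_vec b :: 'k::field vec))"
proof (rule ext, clarify)
  fix a i
  have "(\<Sum>b\<in>{..<CHAR('k)} \<times> {..<CHAR('k)}. vscale (v b) (unit_vec b :: 'k vec)) (a, i)
      = (\<Sum>b\<in>{..<CHAR('k)} \<times> {..<CHAR('k)}. if b = (a, i) then v b else 0)"
    unfolding sum_vec_apply by (rule sum.cong) (auto simp: unit_vec_def)
  also have "\<dots> = box_proj v (a, i)" by simp
  finally show "box_proj v (a, i) = (\<Sum>b\<in>{..<CHAR('k)} \<times> {..<CHAR('k)}. vscale (v b) (unit_vec b)) (a, i)"
    by simp
qed

lemma box_proj_unit_vec:
  "a < CHAR('k) \<Longrightarrow> i < CHAR('k) \<Longrightarrow> box_proj (unit_vec (a, i)) = (unit_vec (a, i) :: 'k::field vec)"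
  by (auto simp: fun_eq_iff unit_vec_def)

definition diag_supported :: "nat \<Rightarrow> 'k::field vec \<Rightarrow> bool" where
  "diag_supported j u \<longleftrightarrow> (\<forall>a i. u (a, i) \<noteq> 0 \<longrightarrow> a = i \<and> j \<le> i \<and> i < CHAR('k))"

lemma diag_supported_decomp:
  fixes u :: "'k::field vec"
  assumes "diag_supported j u"
  shows "u = (\<Sum>i\<in>{j..<CHAR('k)}. vscale (u (i, i)) (unit_vec (i, i)))"
proof (rule ext, clarify)
  fix a b
  have "(\<Sum>i\<in>{j..<CHAR('k)}. vscale (u (i, i)) (unit_vec (i, i))) (a, b)
      = (\<Sum>i\<in>{j..<CHAR('k)}. if i = a \<and> a = b then u (a, b) else 0)"
    unfolding sum_vec_apply by (rule sum.cong) (auto simp: unit_vec_def)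
  also have "\<dots> = u (a, b)"
    using assms unfolding diag_supported_def by (cases "a = b") auto
  finally show "u (a, b) = (\<Sum>i\<in>{j..<CHAR('k)}. vscale (u (i, i)) (unit_vec (i, i))) (a, b)"
    by simp
qed

locale induced_module =
  fixes lam sf :: "'k::field"
  assumes prime_char: "prime CHAR('k)" and char_gt_2: "CHAR('k) > 2"
begin

abbreviation "EE \<equiv> op_E lam"
abbreviation "FF \<equiv> op_F sf"
abbreviation "HH \<equiv> op_H lam"

lemma op_EF_commutator: "EE (FF v) = FF (EE v) + HH v"
proof (rule ext, clarify)
  fix a i
  show "EE (FF v) (a, i) = (FF (EE v) + HH v) (a, i)"
  proof (cases "a < CHAR('k) \<and> i < CHAR('k)")
    case True
    then have ai: "a < CHAR('k)" "i < CHAR('k)" by auto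
    consider "a = 0" | "0 < a" "a + 1 < CHAR('k)" | "Suc a = CHAR('k)" "0 < a"
      using ai char_gt_2 by linarith
    then show ?thesis
    proof cases
      case 3
      from 3(1) have "(of_nat a :: 'k) = -1" by (rule of_nat_eq_minus_one_CHAR)
      then show ?thesis using ai 3 by (auto simp: vec_apply weight_def algebra_simps)
    qed (use ai char_gt_2 in \<open>auto simp: vec_apply weight_def algebra_simps of_nat_diff\<close>)
  qed (auto simp: vec_apply)
qed

lemma op_HE_commutator: "HH (EE v) = EE (HH v) + vscale 2 (EE v)"
  by (rule ext, clarify) (auto simp: vec_apply weight_def algebra_simps of_nat_diff)

lemma op_HF_commutator: "HH (FF v) = FF (HH v) - vscale 2 (FF v)"
proof (rule ext, clarify)
  fix a i
  have "(of_nat (CHAR('k) - 1) :: 'k) = -1"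
    using char_gt_2 by (intro of_nat_eq_minus_one_CHAR) simp
  then show "HH (FF v) (a, i) = (FF (HH v) - vscale 2 (FF v)) (a, i)"
    by (auto simp: vec_apply weight_def algebra_simps of_nat_diff)
qed

lemma op_H_E_power: "HH ((EE ^^ n) v) = (EE ^^ n) (HH v) + vscale (of_nat (2 * n)) ((EE ^^ n) v)"
proof (induction n)
  case (Suc n)
  have "HH ((EE ^^ Suc n) v) = EE (HH ((EE ^^ n) v)) + vscale 2 (EE ((EE ^^ n) v))"
    by (simp add: op_HE_commutator)
  also have "\<dots> = (EE ^^ Suc n) (HH v) + vscale (of_nat (2 * Suc n)) ((EE ^^ Suc n) v)"
    by (simp add: Suc box_endo_add[OF box_endo_mod_E] box_endo_vscale[OF box_endo_mod_E]
        fun_eq_iff vec_apply algebra_simps)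
  finally show ?case .
qed (simp add: fun_eq_iff vec_apply)

lemma op_E_power_F:
  "(EE ^^ Suc n) (FF v) = FF ((EE ^^ Suc n) v) + vscale (of_nat (Suc n)) ((EE ^^ n) (HH v))
    + vscale (of_nat (Suc n * n)) ((EE ^^ n) v)"
proof (induction n)
  case (Suc n)
  let ?E = "EE ^^ Suc n"
  have "(EE ^^ Suc (Suc n)) (FF v) = EE (?E (FF v))" by simp
  also have "?E (FF v) = FF (?E v) + vscale (of_nat (Suc n)) ((EE ^^ n) (HH v))
      + vscale (of_nat (Suc n * n)) ((EE ^^ n) v)"
    by (rule Suc.IH)
  also have "EE \<dots> = EE (FF (?E v)) + vscale (of_nat (Suc n)) (EE ((EE ^^ n) (HH v)))
      + vscale (of_nat (Suc n * n)) (EE ((EE ^^ n) v))"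
    by (simp only: box_endo_add[OF box_endo_mod_E] box_endo_vscale[OF box_endo_mod_E])
  also have "EE (FF (?E v)) = FF ((EE ^^ Suc (Suc n)) v) + HH (?E v)"
    by (simp add: op_EF_commutator)
  also have "HH (?E v) = ?E (HH v) + vscale (of_nat (2 * Suc n)) (?E v)"
    by (rule op_H_E_power)
  finally show ?case by (simp add: fun_eq_iff vec_apply algebra_simps)
qed (simp add: op_EF_commutator fun_eq_iff vec_apply)

lemma op_E_CHAR_F_power: "(EE ^^ CHAR('k)) ((FF ^^ a) v) = (FF ^^ a) ((EE ^^ CHAR('k)) v)"
proof -
  obtain n where n: "CHAR('k) = Suc n" using char_gt_2 by (cases "CHAR('k)") auto
  have "(EE ^^ CHAR('k)) (FF u) = FF ((EE ^^ CHAR('k)) u)" for u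
    using op_E_power_F[of n u] by (simp flip: n)
  then show ?thesis by (induction a) simp_all
qed

lemma op_E_power_unit_vec_first:
  "i < CHAR('k) \<Longrightarrow> (EE ^^ n) (unit_vec (0, i)) = (if i + n < CHAR('k) then unit_vec (0, i + n) else 0)"
proof (induction n)
  case (Suc n)
  have "EE (unit_vec (0, j)) = (if j + 1 < CHAR('k) then unit_vec (0, j + 1) else 0)" for j
    by (rule ext, clarify) (auto simp: unit_vec_def vec_apply)
  then show ?case using Suc by (auto simp: box_endo_zero[OF box_endo_mod_E])
qed simp

lemma op_F_power_unit_vec_first:
  "a < CHAR('k) \<Longrightarrow> i < CHAR('k) \<Longrightarrow> (FF ^^ a) (unit_vec (0, i)) = unit_vec (a, i)"
  by (induction a) (auto simp: unit_vec_def fun_eq_iff)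

lemma op_E_CHAR_unit_vec: "a < CHAR('k) \<Longrightarrow> i < CHAR('k) \<Longrightarrow> (EE ^^ CHAR('k)) (unit_vec (a, i)) = 0"
proof -
  assume ai: "a < CHAR('k)" "i < CHAR('k)"
  have "(FF ^^ a) 0 = 0" by (induction a) (simp_all add: box_endo_zero[OF box_endo_mod_F])
  then show ?thesis
    using ai op_E_CHAR_F_power[of a "unit_vec (0, i)"]
    by (simp add: op_F_power_unit_vec_first op_E_power_unit_vec_first)
qed

lemma op_E_CHAR: "(EE ^^ CHAR('k)) (box_proj v) = 0"
proof -
  obtain n where n: "CHAR('k) = Suc n" using char_gt_2 by (cases "CHAR('k)") auto
  have endo: "box_endo (EE ^^ CHAR('k))" unfolding n by (rule box_endo_funpow[OF box_endo_mod_E])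
  have "(EE ^^ CHAR('k)) (box_proj v)
      = (\<Sum>b\<in>{..<CHAR('k)} \<times> {..<CHAR('k)}. vscale (v b) ((EE ^^ CHAR('k)) (unit_vec b)))"
    by (simp only: box_proj_eq_sum_unit_vec[of v] box_endo_sum[OF endo] box_endo_vscale[OF endo])
  also have "\<dots> = 0" by (rule sum.neutral) (auto simp: op_E_CHAR_unit_vec)
  finally show ?thesis .
qed

lemma op_F_power_apply:
  "n \<le> CHAR('k) \<Longrightarrow> (FF ^^ n) (box_proj u) (a, i) =
    (if a < CHAR('k) \<and> i < CHAR('k) then (if n \<le> a then u (a - n, i) else sf * u (a + CHAR('k) - n, i))
     else 0)"
  by (induction n arbitrary: a i) auto

lemma op_F_CHAR: "(FF ^^ CHAR('k)) (box_proj v) = vscale sf (box_proj v)"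
  by (rule ext, clarify) (simp add: op_F_power_apply)

lemma op_H_power_apply: "(HH ^^ n) (box_proj u) (a, i) = weight lam a i ^ n * box_proj u (a, i)"
  by (induction n arbitrary: a i) auto

lemma weight_frobenius: "weight lam a i ^ CHAR('k) - weight lam a i = lam ^ CHAR('k) - lam"
  unfolding weight_def
  by (simp only: frobenius_diff[OF prime_char] frobenius_add[OF prime_char] frobenius_of_nat[OF prime_char])
    simp

lemma op_H_CHAR:
  "(HH ^^ CHAR('k)) (box_proj v) - HH (box_proj v) - vscale (lam ^ CHAR('k) - lam) (box_proj v) = 0"
proof (rule ext, clarify)
  fix a i
  show "((HH ^^ CHAR('k)) (box_proj v) - HH (box_proj v) - vscale (lam ^ CHAR('k) - lam) (box_proj v)) (a, i)
      = 0 (a, i)"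
    using weight_frobenius[of a i]
    by (simp add: op_H_power_apply vec_apply flip: left_diff_distrib)
qed

lemma fx_rels_subset_annihilator: "fx_rels sf (lam ^ CHAR('k) - lam) \<subseteq> annihilator lam sf"
proof -
  have act_gen: "module_act lam sf ee = EE" "module_act lam sf ff = FF" "module_act lam sf hh = HH"
    by (simp_all add: fun_eq_iff module_act_gen op_gen_def)
  have act_numeral: "module_act lam sf (numeral n) v = vscale (numeral n) (box_proj v)" for n v
    by (metis module_act_scalar fx_scalar_numeral)
  have H_CHAR: "(HH ^^ CHAR('k)) (box_proj v) - HH v - vscale (lam ^ CHAR('k) - lam) (box_proj v) = 0" for v
    using op_H_CHAR[of v] by (simp add: box_endo_box_proj[OF box_endo_mod_H])
  show ?thesis
    unfolding fx_rels_def annihilator_def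
    by (auto simp: module_act_diff module_act_add module_act_mult module_act_power act_gen act_numeral module_act_scalar
        op_EF_commutator op_HE_commutator op_HF_commutator op_E_CHAR op_F_CHAR H_CHAR
        box_proj_box_endo[OF box_endo_mod_E] box_proj_box_endo[OF box_endo_mod_F])
qed

lemma fx_ideal_annihilates: "X \<in> fx_ideal sf (lam ^ CHAR('k) - lam) \<Longrightarrow> module_act lam sf X v = 0"
  using fx_ideal_least[OF ring_ideal_annihilator fx_rels_subset_annihilator]
  by (auto simp: annihilator_def)

abbreviation "TT \<equiv> module_act lam sf fx_casimir"

abbreviation eigen :: "nat \<Rightarrow> 'k" where
  "eigen j \<equiv> (lam + 1 + of_nat (2 * j)) ^ 2"

lemma op_EF_unit_vec_diag:
  "j < CHAR('k) \<Longrightarrow> EE (FF (unit_vec (j, j))) =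
    (if j + 1 < CHAR('k)
     then unit_vec (j + 1, j + 1) + vscale (of_nat (j + 1) * (lam + of_nat j)) (unit_vec (j, j)) else 0)"
  by (rule ext, clarify) (auto simp: unit_vec_def vec_apply algebra_simps)

lemma casimir_unit_vec_diag:
  assumes j: "j < CHAR('k)"
  shows "TT (unit_vec (j, j)) = vscale (eigen j) (unit_vec (j, j))
    + (if j + 1 < CHAR('k) then vscale 4 (unit_vec (j + 1, j + 1)) else 0)"
proof -
  have box: "box_proj (unit_vec (j, j)) = (unit_vec (j, j) :: 'k vec)"
    by (rule box_proj_unit_vec[OF j j])
  have "module_act lam sf (hh - 1) (unit_vec (j, j)) = vscale (lam - 1) (unit_vec (j, j))"
    using j by (auto simp: module_act_diff module_act_gen op_gen_def module_act_one box fun_eq_iff vec_apply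
        unit_vec_def weight_def algebra_simps)
  then have square: "module_act lam sf ((hh - 1) ^ 2) (unit_vec (j, j)) = vscale ((lam - 1) ^ 2) (unit_vec (j, j))"
    by (simp add: power2_eq_square module_act_mult box_endo_vscale[OF box_endo_mod_act] vscale_vscale)
  have "module_act lam sf (4 * (ee * ff)) (unit_vec (j, j)) = vscale 4 (EE (FF (unit_vec (j, j))))"
    using module_act_scalar_mult[of lam sf 4 "ee * ff"]
    by (simp add: fx_scalar_numeral module_act_mult module_act_gen op_gen_def)
  then have TT: "TT (unit_vec (j, j)) = vscale ((lam - 1) ^ 2) (unit_vec (j, j)) + vscale 4 (EE (FF (unit_vec (j, j))))"
    by (simp add: fx_casimir_def module_act_add square)
  show ?thesis
  proof (cases "j + 1 < CHAR('k)")
    case True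
    have "eigen j = (lam - 1) ^ 2 + 4 * (of_nat (j + 1) * (lam + of_nat j))"
      by (simp add: power2_eq_square algebra_simps)
    then show ?thesis
      unfolding TT using True j by (simp add: op_EF_unit_vec_diag fun_eq_iff vec_apply algebra_simps)
  next
    case False
    with j have "Suc j = CHAR('k)" by simp
    then have "(of_nat j :: 'k) = -1" by (rule of_nat_eq_minus_one_CHAR)
    then have "eigen j = (lam - 1) ^ 2" by (simp add: algebra_simps)
    then show ?thesis unfolding TT using False j by (simp add: op_EF_unit_vec_diag)
  qed
qed

lemma casimir_diag_supported:
  assumes u: "diag_supported j u"
  shows "diag_supported j (TT u) \<and> TT u (j, j) = eigen j * u (j, j)"
proof -
  have TU: "TT u = (\<Sum>i\<in>{j..<CHAR('k)}. vscale (u (i, i)) (TT (unit_vec (i, i))))"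
    using arg_cong[OF diag_supported_decomp[OF u], of TT]
    by (simp only: box_endo_sum[OF box_endo_mod_act] box_endo_vscale[OF box_endo_mod_act])
  have coord: "TT (unit_vec (i, i)) (a, b) =
      (if (a, b) = (i, i) then eigen i else 0) + (if i + 1 < CHAR('k) \<and> (a, b) = (i + 1, i + 1) then 4 else 0)"
    if "i < CHAR('k)" for i a b
    using that by (simp add: casimir_unit_vec_diag vec_apply) (simp add: unit_vec_def)
  have diag: "diag_supported j (TT u)"
    unfolding diag_supported_def
  proof (intro allI impI)
    fix a b assume "TT u (a, b) \<noteq> 0"
    then have "(\<Sum>i\<in>{j..<CHAR('k)}. u (i, i) * TT (unit_vec (i, i)) (a, b)) \<noteq> 0"
      by (simp add: TU sum_vec_apply)
    then obtain i where "i \<in> {j..<CHAR('k)}" "u (i, i) * TT (unit_vec (i, i)) (a, b) \<noteq> 0"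
      by (meson sum.not_neutral_contains_not_neutral)
    then show "a = b \<and> j \<le> b \<and> b < CHAR('k)" using coord[of i a b] by (auto split: if_splits)
  qed
  moreover have "TT u (j, j) = eigen j * u (j, j)"
  proof (cases "j < CHAR('k)")
    case True
    have "TT u (j, j) = (\<Sum>i\<in>{j..<CHAR('k)}. u (i, i) * TT (unit_vec (i, i)) (j, j))"
      by (simp add: TU sum_vec_apply)
    also have "\<dots> = (\<Sum>i\<in>{j..<CHAR('k)}. if i = j then u (j, j) * eigen j else 0)"
      by (rule sum.cong) (auto simp: coord)
    finally show ?thesis using True by (simp add: mult.commute)
  next
    case False
    then have "u (j, j) = 0" "TT u (j, j) = 0"
      using u diag unfolding diag_supported_def by blast+
    then show ?thesis by simp
  qed
  ultimately show ?thesis by blast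
qed

lemma casimir_power_unit_vec_diag:
  assumes "j < CHAR('k)"
  shows "diag_supported j ((TT ^^ n) (unit_vec (j, j))) \<and> (TT ^^ n) (unit_vec (j, j)) (j, j) = eigen j ^ n"
proof (induction n)
  case 0
  show ?case using assms by (auto simp: diag_supported_def unit_vec_def)
next
  case (Suc n)
  then show ?case using casimir_diag_supported by simp
qed

lemma casimir_poly_unit_vec_diag:
  assumes "j < CHAR('k)"
  shows "module_act lam sf (fx_poly q fx_casimir) (unit_vec (j, j)) (j, j) = poly q (eigen j)"
proof -
  have "box_proj (unit_vec (j, j)) = (unit_vec (j, j) :: 'k vec)"
    by (rule box_proj_unit_vec[OF assms assms])
  then have "module_act lam sf (fx_poly q fx_casimir) (unit_vec (j, j))
      = (\<Sum>i\<le>degree q. vscale (coeff q i) ((TT ^^ i) (unit_vec (j, j))))"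
    by (simp add: fx_poly_def module_act_sum module_act_scalar_mult module_act_power)
  then show ?thesis
    using casimir_power_unit_vec_diag[OF assms] by (simp add: sum_vec_apply poly_altdef)
qed

lemma casimir_factors_dvd:
  "j < CHAR('k) \<Longrightarrow> module_act lam sf (fx_poly q fx_casimir) (unit_vec (j, j)) = 0 \<Longrightarrow>
    casimir_factors lam j dvd q"
proof (induction "CHAR('k) - j" arbitrary: j q rule: less_induct)
  case less
  have "poly q (eigen j) = 0"
    using casimir_poly_unit_vec_diag[OF less.prems(1), of q] less.prems(2) by (simp add: vec_apply)
  then obtain r where r: "q = [:- eigen j, 1:] * r"
    by (auto simp: poly_eq_0_iff_dvd dvd_def)
  show ?case
  proof (cases "j + 1 < CHAR('k)")
    case False
    with less.prems(1) have "{j..<CHAR('k)} = {j}" by auto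
    then have "casimir_factors lam j = [:- eigen j, 1:]" by (simp add: casimir_factors_def)
    then show ?thesis unfolding r by (simp only: dvd_triv_left)
  next
    case True
    have "module_act lam sf (fx_casimir - fx_scalar (eigen j)) (unit_vec (j, j)) = vscale 4 (unit_vec (j + 1, j + 1))"
      using True less.prems(1)
      by (simp add: module_act_diff module_act_scalar box_proj_unit_vec casimir_unit_vec_diag)
    moreover have "fx_poly q fx_casimir = fx_poly r fx_casimir * fx_poly [:- eigen j, 1:] fx_casimir"
      by (simp only: r mult.commute[of "[:- eigen j, 1:]"] fx_poly_mult)
    moreover have "fx_poly [:- eigen j, 1:] fx_casimir = fx_casimir - fx_scalar (eigen j)"
      by (simp add: fx_poly_linear fx_scalar_uminus)
    ultimately have "vscale 4 (module_act lam sf (fx_poly r fx_casimir) (unit_vec (j + 1, j + 1))) = 0"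
      using less.prems(2) by (simp add: module_act_mult box_endo_vscale[OF box_endo_mod_act])
    moreover have "(4::'k) \<noteq> 0"
    proof -
      have "(4::'k) = 2 * 2" by simp
      then show ?thesis using two_neq_zero[OF prime_char char_gt_2] by (metis mult_eq_0_iff)
    qed
    ultimately have "module_act lam sf (fx_poly r fx_casimir) (unit_vec (j + 1, j + 1)) = 0"
      by (auto simp: fun_eq_iff vec_apply)
    then have "casimir_factors lam (Suc j) dvd r"
      using True less.prems(1) by (intro less.hyps) auto
    then show ?thesis
      unfolding r casimir_factors_Suc[OF less.prems(1)] by (rule mult_dvd_mono[OF dvd_refl])
  qed
qed

end

section \<open>The centre of the reduced enveloping algebra\<close>

lemma casimir_poly_mem_fx_ideal:
  fixes sf sh :: "'k::field"
  assumes prime: "prime CHAR('k)" and char: "CHAR('k) > 2"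
    and roots: "\<forall>q :: 'k poly. degree q > 0 \<longrightarrow> (\<exists>x. poly q x = 0)"
  shows "fx_poly (casimir_poly - [:sh ^ 2:]) fx_casimir \<in> fx_ideal sf sh"
proof -
  interpret sl2_ideal "fx_ideal sf sh" sf sh
    using ring_ideal_fx_ideal fx_rels_subset_fx_ideal by (rule sl2_ideal.intro[OF _ sl2_ideal_axioms.intro])
  obtain \<nu> :: 'k where \<nu>: "\<nu> ^ CHAR('k) - \<nu> = sh"
    using artin_schreier_solvable[OF prime roots] by blast
  let ?\<nu> = "\<lambda>t. \<nu> + of_nat t"
  let ?L = "\<lambda>t. \<Prod>u\<in>{..<CHAR('k)} - {t}. [:- ?\<nu> u, 1:]"
  show ?thesis
  proof (rule casimir_factors_mem[where T = "{..<CHAR('k)}" and \<nu> = ?\<nu> and L = ?L])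
    show "(\<Sum>t<CHAR('k). ?L t) = -1"
      by (rule artin_schreier_partition_of_unity[OF prime \<nu>])
    fix t assume "t \<in> {..<CHAR('k)}"
    then show "[:- ?\<nu> t, 1:] * ?L t = monom 1 CHAR('k) - [:sh, 1:]"
      by (simp add: artin_schreier_factorization[OF prime \<nu>] prod.remove)
    have "?\<nu> t ^ CHAR('k) - ?\<nu> t = sh"
      using artin_schreier_root[OF prime \<nu>, of t] by (simp add: poly_monom)
    then show "casimir_factors (?\<nu> t) 0 = casimir_poly - [:sh ^ 2:]"
      by (rule casimir_poly_factorization[OF prime char roots, symmetric])
  qed simp
qed

lemma casimir_poly_dvd:
  fixes sf sh :: "'k::field"
  assumes prime: "prime CHAR('k)" and char: "CHAR('k) > 2"
    and roots: "\<forall>q :: 'k poly. degree q > 0 \<longrightarrow> (\<exists>x. poly q x = 0)"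
    and q: "fx_poly q fx_casimir \<in> fx_ideal sf sh"
  shows "(casimir_poly - [:sh ^ 2:]) dvd q"
proof -
  obtain \<nu> :: 'k where \<nu>: "\<nu> ^ CHAR('k) - \<nu> = sh"
    using artin_schreier_solvable[OF prime roots] by blast
  interpret induced_module \<nu> sf
    using prime char by unfold_locales
  have "module_act \<nu> sf (fx_poly q fx_casimir) (unit_vec (0, 0)) = 0"
    using q by (intro fx_ideal_annihilates) (simp add: \<nu>)
  then have "casimir_factors \<nu> 0 dvd q"
    using char by (intro casimir_factors_dvd) auto
  then show ?thesis
    by (simp add: casimir_poly_factorization[OF prime char roots \<nu>])
qed

lemma casimir_vanishes_iff:
  fixes sf sh :: "'k::field"
  assumes "prime CHAR('k)" and "CHAR('k) > 2"
    and "\<forall>q :: 'k poly. degree q > 0 \<longrightarrow> (\<exists>x. poly q x = 0)"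
  shows "vanishes_in sf sh (fa_poly q casimir) \<longleftrightarrow> (casimir_poly - [:sh ^ 2:]) dvd q"
proof
  assume "vanishes_in sf sh (fa_poly q casimir)"
  then show "(casimir_poly - [:sh ^ 2:]) dvd q"
    using casimir_poly_dvd[OF assms]
    by (simp add: vanishes_in_def fx_ideal_def to_fa_poly to_fa_casimir)
next
  assume "(casimir_poly - [:sh ^ 2:]) dvd q"
  then obtain r where "q = (casimir_poly - [:sh ^ 2:]) * r" by (elim dvdE)
  then have "fx_poly q fx_casimir \<in> fx_ideal sf sh"
    using ring_ideal.mult_right_mem[OF ring_ideal_fx_ideal casimir_poly_mem_fx_ideal[OF assms]]
    by (simp add: fx_poly_mult)
  then show "vanishes_in sf sh (fa_poly q casimir)"
    by (simp add: vanishes_in_def fx_ideal_def to_fa_poly to_fa_casimir)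
qed

theorem proposition4p1:
  fixes a :: "'k::field"
  assumes "prime CHAR('k)" and "CHAR('k) > 2"
    and "\<forall>q :: 'k poly. degree q > 0 \<longrightarrow> (\<exists>x. poly q x = 0)"
    and "a \<noteq> 0"
  defines "p \<equiv> CHAR('k)"
  defines "g \<equiv> monom (1::'k) p - smult 2 (monom 1 ((p + 1) div 2)) + monom 1 1"
  shows "(\<forall>q. vanishes_in 0 0 (fa_poly q casimir) \<longleftrightarrow> g dvd q)
       \<and> (\<forall>q. vanishes_in 1 0 (fa_poly q casimir) \<longleftrightarrow> g dvd q)
       \<and> (\<forall>q. vanishes_in 0 a (fa_poly q casimir) \<longleftrightarrow> (g - [:a^2:]) dvd q)"
proof -
  have "g = casimir_poly" by (simp add: g_def p_def casimir_poly_def)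
  then show ?thesis
    using casimir_vanishes_iff[OF assms(1-3)] by auto
qed

end
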